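(* If $T$ is totally positive, then $X^\mathrm{mon}\otimes_{k^\mathrm{mon}}T$ is a tropicalization of $X$ along $v$.
   Context: Let $k$ be an ordered blueprint and $B$ an ordered blue $k$-algebra, i.e. a morphism $k\to B$ of ordered blueprints; let $X=\operatorname{Spec}B$. For an ordered blueprint $C$, its associated monomial blueprint $C^\mathrm{mon}$ has the same underlying monoid as $C$, with partial order (subaddition) generated by the left monomial relations $a\leq\sum b_j$ ($a,b_j$ in the underlying monoid) that hold in $C$; its associated totally positive blueprint $C^\mathrm{pos}$ is $C$ with the additional relation $0\leq 1$ adjoined. An ordered blueprint $T$ is totally positive if $0\leq 1$ holds in $T$. A valuation $v:k\to T$ between ordered blueprints is a multiplicative map (a morphism of underlying monoids) such that the composition $k^\mathrm{mon}\to k\xrightarrow{v}T\to T^\mathrm{pos}$ is a morphism of ordered blueprints. For an ordered blue $T$-algebra $S$, let $\mathrm{Val}_v(B,S)$ be the set of valuations $w:B\to S$ that extend $v$, i.e. such that the square formed by $k\to B$, $v:k\to T$, $w:B\to S$ and $T\to S$ commutes. A tropicalization of $X$ along $v$ is an ordered blue $T$-scheme that represents the functor $S\mapsto\mathrm{Val}_v(B,S)$ on ordered blue $T$-algebras. Here $X^\mathrm{mon}=\operatorname{Spec}B^\mathrm{mon}$, and the tensor product $\otimes_{k^\mathrm{mon}}$ is taken in the category of ordered blueprints (base change along $k^\mathrm{mon}\to T$). *)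

theory Defs
  imports Main "HOL-Library.Multiset" "HOL-Library.FuncSet"
begin

text \<open>An ordered blueprint: a commutative monoid with zero (carrier bp_elts, product bp_mul,
unit bp_one, zero bp_zero) together with a subaddition bp_le, i.e. a preorder on the free
semiring N[A] of finite formal sums (multisets) of monoid elements that is closed under addition
and multiplication and identifies the monoid zero with the empty sum.\<close>

record 'a bp =
  bp_elts :: "'a set"
  bp_mul  :: "'a \<Rightarrow> 'a \<Rightarrow> 'a"
  bp_one  :: 'a
  bp_zero :: 'a
  bp_le   :: "'a multiset \<Rightarrow> 'a multiset \<Rightarrow> bool"

definition mmul :: "('a \<Rightarrow> 'a \<Rightarrow> 'a) \<Rightarrow> 'a multiset \<Rightarrow> 'a multiset \<Rightarrow> 'a multiset" where
  "mmul m x y = sum_mset (image_mset (\<lambda>a. image_mset (m a) y) x)"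

definition ordered_blueprint :: "'a bp \<Rightarrow> bool" where
  "ordered_blueprint B \<longleftrightarrow>
     (let E = bp_elts B; m = bp_mul B; le = bp_le B in
      bp_one B \<in> E \<and> bp_zero B \<in> E \<and>
      (\<forall>a\<in>E. \<forall>b\<in>E. m a b \<in> E) \<and>
      (\<forall>a\<in>E. \<forall>b\<in>E. \<forall>c\<in>E. m (m a b) c = m a (m b c)) \<and>
      (\<forall>a\<in>E. \<forall>b\<in>E. m a b = m b a) \<and>
      (\<forall>a\<in>E. m (bp_one B) a = a) \<and>
      (\<forall>a\<in>E. m (bp_zero B) a = bp_zero B) \<and>
      (\<forall>x y. le x y \<longrightarrow> set_mset x \<subseteq> E \<and> set_mset y \<subseteq> E) \<and>
      (\<forall>x. set_mset x \<subseteq> E \<longrightarrow> le x x) \<and>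
      (\<forall>x y z. le x y \<longrightarrow> le y z \<longrightarrow> le x z) \<and>
      (\<forall>x y z w. le x y \<longrightarrow> le z w \<longrightarrow> le (x + z) (y + w)) \<and>
      (\<forall>x y z w. le x y \<longrightarrow> le z w \<longrightarrow> le (mmul m x z) (mmul m y w)) \<and>
      le {#bp_zero B#} {#} \<and> le {#} {#bp_zero B#})"

inductive gen_sle :: "'a set \<Rightarrow> ('a \<Rightarrow> 'a \<Rightarrow> 'a) \<Rightarrow> 'a \<Rightarrow>
    ('a multiset \<Rightarrow> 'a multiset \<Rightarrow> bool) \<Rightarrow> 'a multiset \<Rightarrow> 'a multiset \<Rightarrow> bool"
  for E m z R where
  base: "R x y \<Longrightarrow> set_mset x \<subseteq> E \<Longrightarrow> set_mset y \<subseteq> E \<Longrightarrow> gen_sle E m z R x y"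
| refl: "set_mset x \<subseteq> E \<Longrightarrow> gen_sle E m z R x x"
| trans: "gen_sle E m z R x y \<Longrightarrow> gen_sle E m z R y w \<Longrightarrow> gen_sle E m z R x w"
| add: "gen_sle E m z R x y \<Longrightarrow> gen_sle E m z R u w \<Longrightarrow> gen_sle E m z R (x + u) (y + w)"
| mult: "gen_sle E m z R x y \<Longrightarrow> gen_sle E m z R u w \<Longrightarrow>
           gen_sle E m z R (mmul m x u) (mmul m y w)"
| zero1: "gen_sle E m z R {#z#} {#}"
| zero2: "gen_sle E m z R {#} {#z#}"

text \<open>Associated monomial blueprint C^mon: same monoid, subaddition generated by the left monomial
relations a \<le> \<Sum> b_j holding in C.\<close>
definition bp_mon :: "'a bp \<Rightarrow> 'a bp" where
  "bp_mon C = C\<lparr> bp_le := gen_sle (bp_elts C) (bp_mul C) (bp_zero C)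
                     (\<lambda>x y. bp_le C x y \<and> size x = 1) \<rparr>"

definition bp_pos :: "'a bp \<Rightarrow> 'a bp" where
  "bp_pos C = C\<lparr> bp_le := gen_sle (bp_elts C) (bp_mul C) (bp_zero C)
                     (\<lambda>x y. bp_le C x y \<or> (x = {#} \<and> y = {#bp_one C#})) \<rparr>"

definition totally_positive :: "'a bp \<Rightarrow> bool" where
  "totally_positive T \<longleftrightarrow> bp_le T {#} {#bp_one T#}"

definition mult_map :: "'a bp \<Rightarrow> 'b bp \<Rightarrow> ('a \<Rightarrow> 'b) \<Rightarrow> bool" where
  "mult_map B C f \<longleftrightarrow>
     f ` bp_elts B \<subseteq> bp_elts C \<and> f (bp_one B) = bp_one C \<and> f (bp_zero B) = bp_zero C \<and>
     (\<forall>a\<in>bp_elts B. \<forall>b\<in>bp_elts B. f (bp_mul B a b) = bp_mul C (f a) (f b))"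

definition bp_hom :: "'a bp \<Rightarrow> 'b bp \<Rightarrow> ('a \<Rightarrow> 'b) \<Rightarrow> bool" where
  "bp_hom B C f \<longleftrightarrow> mult_map B C f \<and>
     (\<forall>x y. bp_le B x y \<longrightarrow> bp_le C (image_mset f x) (image_mset f y))"

text \<open>Valuation: multiplicative map v such that k^mon \<rightarrow> k \<rightarrow> T \<rightarrow> T^pos is a morphism.\<close>
definition valuation :: "'a bp \<Rightarrow> 'b bp \<Rightarrow> ('a \<Rightarrow> 'b) \<Rightarrow> bool" where
  "valuation k T v \<longleftrightarrow> mult_map k T v \<and> bp_hom (bp_mon k) (bp_pos T) v"

text \<open>Val_v(B,S): valuations w : B \<rightarrow> S extending v, where B is a k-algebra via f and S a T-algebra
via g (functions taken extensional on the carrier of B).\<close>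
definition val_ext :: "'k bp \<Rightarrow> 'b bp \<Rightarrow> ('k \<Rightarrow> 'b) \<Rightarrow> 's bp \<Rightarrow> ('k \<Rightarrow> 't) \<Rightarrow> ('t \<Rightarrow> 's)
    \<Rightarrow> ('b \<Rightarrow> 's) set" where
  "val_ext k B f S v g = {w. w \<in> extensional (bp_elts B) \<and> valuation B S w \<and>
                             (\<forall>l\<in>bp_elts k. w (f l) = g (v l))}"

text \<open>Morphisms of ordered blue T-algebras P \<rightarrow> S (P a T-algebra via i, S via g).\<close>
definition hom_under :: "'t bp \<Rightarrow> 'p bp \<Rightarrow> ('t \<Rightarrow> 'p) \<Rightarrow> 's bp \<Rightarrow> ('t \<Rightarrow> 's) \<Rightarrow> ('p \<Rightarrow> 's) set" where
  "hom_under T P i S g = {h. h \<in> extensional (bp_elts P) \<and> bp_hom P S h \<and>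
                             (\<forall>c\<in>bp_elts T. h (i c) = g c)}"

inductive tens_eq :: "'k bp \<Rightarrow> 'b bp \<Rightarrow> 't bp \<Rightarrow> ('k \<Rightarrow> 'b) \<Rightarrow> ('k \<Rightarrow> 't) \<Rightarrow>
    'b \<times> 't \<Rightarrow> 'b \<times> 't \<Rightarrow> bool"
  for k B T f v where
  gen: "a \<in> bp_elts B \<Longrightarrow> c \<in> bp_elts T \<Longrightarrow> l \<in> bp_elts k \<Longrightarrow>
          tens_eq k B T f v (bp_mul B a (f l), c) (a, bp_mul T (v l) c)"
| refl: "a \<in> bp_elts B \<Longrightarrow> c \<in> bp_elts T \<Longrightarrow> tens_eq k B T f v (a, c) (a, c)"
| sym: "tens_eq k B T f v p q \<Longrightarrow> tens_eq k B T f v q p"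
| trans: "tens_eq k B T f v p q \<Longrightarrow> tens_eq k B T f v q r \<Longrightarrow> tens_eq k B T f v p r"

definition tens_cls :: "'k bp \<Rightarrow> 'b bp \<Rightarrow> 't bp \<Rightarrow> ('k \<Rightarrow> 'b) \<Rightarrow> ('k \<Rightarrow> 't) \<Rightarrow>
    'b \<times> 't \<Rightarrow> ('b \<times> 't) set" where
  "tens_cls k B T f v p = {q. tens_eq k B T f v p q}"

definition tens_elts :: "'k bp \<Rightarrow> 'b bp \<Rightarrow> 't bp \<Rightarrow> ('k \<Rightarrow> 'b) \<Rightarrow> ('k \<Rightarrow> 't) \<Rightarrow>
    ('b \<times> 't) set set" where
  "tens_elts k B T f v = tens_cls k B T f v ` (bp_elts B \<times> bp_elts T)"

definition tens_mul :: "'k bp \<Rightarrow> 'b bp \<Rightarrow> 't bp \<Rightarrow> ('k \<Rightarrow> 'b) \<Rightarrow> ('k \<Rightarrow> 't) \<Rightarrow>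
    ('b \<times> 't) set \<Rightarrow> ('b \<times> 't) set \<Rightarrow> ('b \<times> 't) set" where
  "tens_mul k B T f v X Y =
     (let p = (SOME p. p \<in> X); q = (SOME q. q \<in> Y) in
      tens_cls k B T f v (bp_mul B (fst p) (fst q), bp_mul T (snd p) (snd q)))"

definition tens_inl :: "'k bp \<Rightarrow> 'b bp \<Rightarrow> 't bp \<Rightarrow> ('k \<Rightarrow> 'b) \<Rightarrow> ('k \<Rightarrow> 't) \<Rightarrow>
    'b \<Rightarrow> ('b \<times> 't) set" where
  "tens_inl k B T f v b = tens_cls k B T f v (b, bp_one T)"

definition tens_inr :: "'k bp \<Rightarrow> 'b bp \<Rightarrow> 't bp \<Rightarrow> ('k \<Rightarrow> 'b) \<Rightarrow> ('k \<Rightarrow> 't) \<Rightarrow>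
    't \<Rightarrow> ('b \<times> 't) set" where
  "tens_inr k B T f v c = tens_cls k B T f v (bp_one B, c)"

definition bp_tensor :: "'k bp \<Rightarrow> 'b bp \<Rightarrow> 't bp \<Rightarrow> ('k \<Rightarrow> 'b) \<Rightarrow> ('k \<Rightarrow> 't) \<Rightarrow>
    ('b \<times> 't) set bp" where
  "bp_tensor k B T f v =
     \<lparr> bp_elts = tens_elts k B T f v,
       bp_mul = tens_mul k B T f v,
       bp_one = tens_cls k B T f v (bp_one B, bp_one T),
       bp_zero = tens_cls k B T f v (bp_zero B, bp_zero T),
       bp_le = gen_sle (tens_elts k B T f v) (tens_mul k B T f v)
                 (tens_cls k B T f v (bp_zero B, bp_zero T))
                 (\<lambda>x y. (\<exists>a b. bp_le B a b \<and> x = image_mset (tens_inl k B T f v) a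
                                            \<and> y = image_mset (tens_inl k B T f v) b) \<or>
                       (\<exists>a b. bp_le T a b \<and> x = image_mset (tens_inr k B T f v) a
                                            \<and> y = image_mset (tens_inr k B T f v) b)) \<rparr>"

end

theory Submission
  imports Defs
begin

text \<open>The tensor product of B^mon and T over k^mon is a pushout: every element is the class of
  a pair (a, c), which equals inl a * inr c, and its subaddition is generated by those of B^mon
  and T. Hence a morphism of T-algebras out of it amounts to a morphism w : B^mon \<rightarrow> S with
  w \<circ> f = g \<circ> v on k. If T is totally positive, then so is every T-algebra S, so S^pos = S and
  the valuations B \<rightarrow> S are exactly the morphisms B^mon \<rightarrow> S.\<close>

section \<open>Ordered blueprints and generated subadditions\<close>

locale bp_monoid =
  fixes B :: "'a bp"
  assumes one_closed: "bp_one B \<in> bp_elts B"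
    and zero_closed: "bp_zero B \<in> bp_elts B"
    and mul_closed: "a \<in> bp_elts B \<Longrightarrow> b \<in> bp_elts B \<Longrightarrow> bp_mul B a b \<in> bp_elts B"
    and mul_assoc: "a \<in> bp_elts B \<Longrightarrow> b \<in> bp_elts B \<Longrightarrow> c \<in> bp_elts B \<Longrightarrow>
      bp_mul B (bp_mul B a b) c = bp_mul B a (bp_mul B b c)"
    and mul_comm: "a \<in> bp_elts B \<Longrightarrow> b \<in> bp_elts B \<Longrightarrow> bp_mul B a b = bp_mul B b a"
    and one_mul: "a \<in> bp_elts B \<Longrightarrow> bp_mul B (bp_one B) a = a"
    and zero_mul: "a \<in> bp_elts B \<Longrightarrow> bp_mul B (bp_zero B) a = bp_zero B"
begin

lemma mul_one: "a \<in> bp_elts B \<Longrightarrow> bp_mul B a (bp_one B) = a"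
  using mul_comm one_mul one_closed by simp

lemma mul_mul_swap:
  assumes "a \<in> bp_elts B" "b \<in> bp_elts B" "c \<in> bp_elts B" "d \<in> bp_elts B"
  shows "bp_mul B (bp_mul B a b) (bp_mul B c d) = bp_mul B (bp_mul B a c) (bp_mul B b d)"
proof -
  have "bp_mul B b (bp_mul B c d) = bp_mul B c (bp_mul B b d)"
    using assms by (metis mul_assoc mul_comm)
  then show ?thesis
    using assms by (simp add: mul_assoc mul_closed)
qed

end

locale ordered_bp = bp_monoid +
  assumes le_carrier: "bp_le B x y \<Longrightarrow> set_mset x \<subseteq> bp_elts B \<and> set_mset y \<subseteq> bp_elts B"
    and le_refl: "set_mset x \<subseteq> bp_elts B \<Longrightarrow> bp_le B x x"
    and le_trans: "bp_le B x y \<Longrightarrow> bp_le B y z \<Longrightarrow> bp_le B x z"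
    and le_add: "bp_le B x y \<Longrightarrow> bp_le B z w \<Longrightarrow> bp_le B (x + z) (y + w)"
    and le_mmul: "bp_le B x y \<Longrightarrow> bp_le B z w \<Longrightarrow>
      bp_le B (mmul (bp_mul B) x z) (mmul (bp_mul B) y w)"
    and zero_le_empty: "bp_le B {#bp_zero B#} {#}"
    and empty_le_zero: "bp_le B {#} {#bp_zero B#}"

lemma ordered_blueprint_iff_ordered_bp: "ordered_blueprint B \<longleftrightarrow> ordered_bp B"
  unfolding ordered_blueprint_def ordered_bp_def ordered_bp_axioms_def bp_monoid_def Let_def
  by (simp add: Ball_def conj_assoc)

lemma mmul_add_mset [simp]: "mmul m (add_mset a x) y = image_mset (m a) y + mmul m x y"
  by (simp add: mmul_def)

lemma mmul_empty [simp]: "mmul m {#} y = {#}"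
  by (simp add: mmul_def)

lemma set_mmul: "set_mset (mmul m x y) \<subseteq> {m a b | a b. a \<in># x \<and> b \<in># y}"
  by (induction x) (auto, blast)

lemma image_mmul:
  assumes "\<And>a b. a \<in># x \<Longrightarrow> b \<in># y \<Longrightarrow> h (m a b) = m' (h a) (h b)"
  shows "image_mset h (mmul m x y) = mmul m' (image_mset h x) (image_mset h y)"
  using assms
proof (induction x)
  case (add a x)
  have "image_mset h (image_mset (m a) y) = image_mset (m' (h a)) (image_mset h y)"
    by (simp add: multiset.map_comp o_def add.prems cong: image_mset_cong)
  then show ?case using add by simp
qed simp

lemma gen_sle_carrier:
  assumes "gen_sle E m z R x y"
    and "\<And>a b. a \<in> E \<Longrightarrow> b \<in> E \<Longrightarrow> m a b \<in> E" and "z \<in> E"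
  shows "set_mset x \<subseteq> E \<and> set_mset y \<subseteq> E"
  using assms(1)
proof induction
  case (mult x y u w)
  then show ?case using set_mmul[of m x u] set_mmul[of m y w] assms(2) by blast
qed (use assms in auto)

lemma ordered_blueprint_gen_sle:
  assumes "bp_monoid C" and "bp_le C = gen_sle (bp_elts C) (bp_mul C) (bp_zero C) R"
  shows "ordered_blueprint C"
proof -
  interpret bp_monoid C by fact
  show ?thesis
    unfolding ordered_blueprint_iff_ordered_bp ordered_bp_def ordered_bp_axioms_def assms(2)
  proof (intro conjI allI impI bp_monoid_axioms)
    show "set_mset x \<subseteq> bp_elts C" "set_mset y \<subseteq> bp_elts C"
      if "gen_sle (bp_elts C) (bp_mul C) (bp_zero C) R x y" for x y
      using gen_sle_carrier[OF that mul_closed zero_closed] by simp_all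
  qed (rule gen_sle.intros; assumption)+
qed

lemma (in ordered_bp) gen_sle_image:
  assumes "gen_sle E m z R x y"
    and closed: "\<And>a b. a \<in> E \<Longrightarrow> b \<in> E \<Longrightarrow> m a b \<in> E" and "z \<in> E"
    and h_closed: "\<And>a. a \<in> E \<Longrightarrow> h a \<in> bp_elts B"
    and h_mul: "\<And>a b. a \<in> E \<Longrightarrow> b \<in> E \<Longrightarrow> h (m a b) = bp_mul B (h a) (h b)"
    and h_zero: "h z = bp_zero B"
    and h_base: "\<And>x y. R x y \<Longrightarrow> set_mset x \<subseteq> E \<Longrightarrow> set_mset y \<subseteq> E \<Longrightarrow>
      bp_le B (image_mset h x) (image_mset h y)"
  shows "bp_le B (image_mset h x) (image_mset h y)"
  using assms(1)
proof induction
  case (base x y)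
  then show ?case by (rule h_base)
next
  case (refl x)
  then show ?case using h_closed by (intro le_refl) auto
next
  case (trans x y w)
  then show ?case using le_trans by blast
next
  case (add x y u w)
  then show ?case by (simp add: le_add)
next
  case (mult x y u w)
  have "set_mset (x + y + u + w) \<subseteq> E"
    using gen_sle_carrier[OF mult(1) closed \<open>z \<in> E\<close>] gen_sle_carrier[OF mult(2) closed \<open>z \<in> E\<close>]
    by auto
  then have "image_mset h (mmul m x u) = mmul (bp_mul B) (image_mset h x) (image_mset h u)"
    and "image_mset h (mmul m y w) = mmul (bp_mul B) (image_mset h y) (image_mset h w)"
    by (auto intro!: image_mmul h_mul)
  then show ?case using le_mmul[OF mult(3,4)] by simp
next
  case zero1
  then show ?case by (simp add: h_zero zero_le_empty)
next
  case zero2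
  then show ?case by (simp add: h_zero empty_le_zero)
qed

section \<open>Morphisms, monomial and totally positive blueprints\<close>

lemma mult_mapD:
  assumes "mult_map B C h"
  shows mult_map_closed: "a \<in> bp_elts B \<Longrightarrow> h a \<in> bp_elts C"
    and mult_map_one: "h (bp_one B) = bp_one C"
    and mult_map_zero: "h (bp_zero B) = bp_zero C"
    and mult_map_mul: "a \<in> bp_elts B \<Longrightarrow> b \<in> bp_elts B \<Longrightarrow>
      h (bp_mul B a b) = bp_mul C (h a) (h b)"
  using assms unfolding mult_map_def by blast+

lemma bp_homD:
  assumes "bp_hom B C h"
  shows bp_hom_mult_map: "mult_map B C h"
    and bp_hom_le: "bp_le B x y \<Longrightarrow> bp_le C (image_mset h x) (image_mset h y)"
  using assms unfolding bp_hom_def by blast+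

lemma bp_hom_comp:
  assumes "bp_hom A B h" and "bp_hom B C h'"
  shows "bp_hom A C (h' \<circ> h)"
  using assms unfolding bp_hom_def mult_map_def
  by (auto simp: image_subset_iff simp flip: multiset.map_comp)

lemma bp_hom_restrict:
  assumes "ordered_blueprint A" and "bp_hom A C h"
  shows "bp_hom A C (restrict h (bp_elts A))"
proof -
  interpret ordered_bp A using assms(1) by (simp add: ordered_blueprint_iff_ordered_bp)
  have "image_mset (restrict h (bp_elts A)) x = image_mset h x"
    if "set_mset x \<subseteq> bp_elts A" for x
    using that by (auto intro!: image_mset_cong)
  then show ?thesis
    using assms(2) le_carrier unfolding bp_hom_def mult_map_def
    by (auto simp: one_closed zero_closed mul_closed)
qed

lemma totally_positive_hom:
  assumes "bp_hom T S g" and "totally_positive T"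
  shows "totally_positive S"
  using bp_hom_le[OF assms(1)] assms(2) mult_map_one[OF bp_hom_mult_map[OF assms(1)]]
  unfolding totally_positive_def by fastforce

lemma bp_mon_simps [simp]:
  "bp_elts (bp_mon C) = bp_elts C" "bp_mul (bp_mon C) = bp_mul C"
  "bp_one (bp_mon C) = bp_one C" "bp_zero (bp_mon C) = bp_zero C"
  by (simp_all add: bp_mon_def)

lemma ordered_blueprint_mon:
  assumes "ordered_blueprint C"
  shows "ordered_blueprint (bp_mon C)"
proof (rule ordered_blueprint_gen_sle)
  have "bp_monoid C"
    using assms by (simp add: ordered_blueprint_iff_ordered_bp ordered_bp_def)
  then show "bp_monoid (bp_mon C)"
    unfolding bp_monoid_def bp_mon_simps .
  show "bp_le (bp_mon C) = gen_sle (bp_elts (bp_mon C)) (bp_mul (bp_mon C)) (bp_zero (bp_mon C))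
      (\<lambda>x y. bp_le C x y \<and> size x = 1)"
    by (simp add: bp_mon_def)
qed

lemma mult_map_mon_iff [simp]:
  "mult_map (bp_mon B) C h \<longleftrightarrow> mult_map B C h" "mult_map B (bp_mon C) h \<longleftrightarrow> mult_map B C h"
  by (simp_all add: mult_map_def)

lemma bp_pos_eq_self:
  assumes "ordered_blueprint S" and "totally_positive S"
  shows "bp_pos S = S"
proof -
  interpret ordered_bp S using assms(1) by (simp add: ordered_blueprint_iff_ordered_bp)
  let ?R = "\<lambda>x y. bp_le S x y \<or> (x = {#} \<and> y = {#bp_one S#})"
  have "gen_sle (bp_elts S) (bp_mul S) (bp_zero S) ?R = bp_le S"
  proof (intro ext iffI)
    fix x y
    assume "gen_sle (bp_elts S) (bp_mul S) (bp_zero S) ?R x y"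
    from gen_sle_image[OF this mul_closed zero_closed, of id]
    show "bp_le S x y"
      using assms(2) unfolding totally_positive_def by auto
  next
    fix x y
    assume "bp_le S x y"
    then show "gen_sle (bp_elts S) (bp_mul S) (bp_zero S) ?R x y"
      by (auto intro: gen_sle.base dest: le_carrier)
  qed
  then show ?thesis
    by (simp add: bp_pos_def)
qed

lemma valuation_iff_hom_mon:
  assumes "ordered_blueprint S" and "totally_positive S"
  shows "valuation B S w \<longleftrightarrow> bp_hom (bp_mon B) S w"
  using bp_pos_eq_self[OF assms] by (simp add: valuation_def bp_hom_def)

lemma val_ext_eq_hom_under:
  assumes "ordered_blueprint S" and "totally_positive S"
  shows "val_ext k B f S v g = hom_under (bp_mon k) (bp_mon B) f S (g \<circ> v)"
  using valuation_iff_hom_mon[OF assms] by (auto simp: val_ext_def hom_under_def)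

section \<open>The tensor product\<close>

locale tensor_product = k: ordered_bp k + B: ordered_bp B + T: ordered_bp T
  for k :: "'k bp" and B :: "'b bp" and T :: "'t bp" +
  fixes f :: "'k \<Rightarrow> 'b" and v :: "'k \<Rightarrow> 't"
  assumes f_mult: "mult_map k B f" and v_mult: "mult_map k T v"
begin

abbreviation "eq \<equiv> tens_eq k B T f v"
abbreviation "cls \<equiv> tens_cls k B T f v"
abbreviation "mul \<equiv> tens_mul k B T f v"
abbreviation "inl \<equiv> tens_inl k B T f v"
abbreviation "inr \<equiv> tens_inr k B T f v"
abbreviation "E \<equiv> tens_elts k B T f v"
abbreviation "tensor \<equiv> bp_tensor k B T f v"

definition pair_mul :: "'b \<times> 't \<Rightarrow> 'b \<times> 't \<Rightarrow> 'b \<times> 't" where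
  "pair_mul p q = (bp_mul B (fst p) (fst q), bp_mul T (snd p) (snd q))"

definition gen_rel :: "('b \<times> 't) set multiset \<Rightarrow> ('b \<times> 't) set multiset \<Rightarrow> bool" where
  "gen_rel x y \<longleftrightarrow>
     (\<exists>a b. bp_le B a b \<and> x = image_mset inl a \<and> y = image_mset inl b) \<or>
     (\<exists>a b. bp_le T a b \<and> x = image_mset inr a \<and> y = image_mset inr b)"

lemma tensor_simps:
  "bp_elts tensor = E" "bp_mul tensor = mul"
  "bp_one tensor = cls (bp_one B, bp_one T)" "bp_zero tensor = cls (bp_zero B, bp_zero T)"
  "bp_le tensor = gen_sle E mul (cls (bp_zero B, bp_zero T)) gen_rel"
  by (simp_all add: bp_tensor_def gen_rel_def[abs_def])

lemmas f_closed = mult_map_closed[OF f_mult] and v_closed = mult_map_closed[OF v_mult]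

lemma eq_carrier: "eq p q \<Longrightarrow> p \<in> bp_elts B \<times> bp_elts T \<and> q \<in> bp_elts B \<times> bp_elts T"
  by (induction rule: tens_eq.induct) (auto intro: B.mul_closed T.mul_closed f_closed v_closed)

lemma eq_refl: "p \<in> bp_elts B \<times> bp_elts T \<Longrightarrow> eq p p"
  by (cases p) (auto intro: tens_eq.refl)

lemma eq_pair_mul_right:
  assumes "eq p q" and "r \<in> bp_elts B \<times> bp_elts T"
  shows "eq (pair_mul p r) (pair_mul q r)"
  using assms
proof (induction rule: tens_eq.induct)
  case (gen a c l)
  obtain b d where r: "r = (b, d)" "b \<in> bp_elts B" "d \<in> bp_elts T"
    using gen.prems by auto
  have "eq (bp_mul B (bp_mul B a b) (f l), bp_mul T c d)
      (bp_mul B a b, bp_mul T (v l) (bp_mul T c d))"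
    using gen r by (intro tens_eq.gen) (auto intro: B.mul_closed T.mul_closed)
  moreover have "bp_mul B (bp_mul B a (f l)) b = bp_mul B (bp_mul B a b) (f l)"
    using gen r f_closed by (simp add: B.mul_assoc B.mul_comm[of "f l" b])
  ultimately show ?case
    using gen r v_closed by (simp add: pair_mul_def T.mul_assoc)
next
  case (refl a c)
  then show ?case by (auto intro!: eq_refl B.mul_closed T.mul_closed simp: pair_mul_def)
next
  case (sym p q)
  then show ?case by (blast intro: tens_eq.sym)
next
  case (trans p q r')
  then show ?case by (blast intro: tens_eq.trans)
qed

lemma eq_pair_mul:
  assumes "eq p p'" and "eq q q'"
  shows "eq (pair_mul p q) (pair_mul p' q')"
proof -
  have comm: "pair_mul r s = pair_mul s r"
    if "r \<in> bp_elts B \<times> bp_elts T" "s \<in> bp_elts B \<times> bp_elts T" for r s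
    using that by (auto simp: pair_mul_def B.mul_comm T.mul_comm)
  have "eq (pair_mul p q) (pair_mul p' q)" and "eq (pair_mul q p') (pair_mul q' p')"
    using assms eq_carrier by (blast intro: eq_pair_mul_right)+
  moreover have "pair_mul p' q = pair_mul q p'" and "pair_mul q' p' = pair_mul p' q'"
    using assms eq_carrier comm by blast+
  ultimately show ?thesis
    by (metis tens_eq.trans)
qed

lemma mem_cls: "p \<in> bp_elts B \<times> bp_elts T \<Longrightarrow> p \<in> cls p"
  by (simp add: tens_cls_def eq_refl)

lemma cls_eqI: "eq p q \<Longrightarrow> cls p = cls q"
  unfolding tens_cls_def using tens_eq.sym tens_eq.trans by blast

lemma eq_some_cls: "p \<in> bp_elts B \<times> bp_elts T \<Longrightarrow> eq p (SOME q. q \<in> cls p)"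
  using someI[of "\<lambda>q. q \<in> cls p", OF mem_cls] by (simp add: tens_cls_def)

lemma tens_elts_cases:
  assumes "X \<in> E"
  obtains a c where "a \<in> bp_elts B" "c \<in> bp_elts T" "X = cls (a, c)"
  using assms by (auto simp: tens_elts_def)

lemma cls_in_tens_elts: "a \<in> bp_elts B \<Longrightarrow> c \<in> bp_elts T \<Longrightarrow> cls (a, c) \<in> E"
  by (simp add: tens_elts_def)

text \<open>\<open>tens_mul\<close> multiplies arbitrary representatives; this is harmless because \<open>eq\<close> is a
  congruence for the componentwise product.\<close>

lemma mul_cls:
  assumes "a \<in> bp_elts B" "c \<in> bp_elts T" "b \<in> bp_elts B" "d \<in> bp_elts T"
  shows "mul (cls (a, c)) (cls (b, d)) = cls (bp_mul B a b, bp_mul T c d)"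
proof -
  have "mul (cls (a, c)) (cls (b, d))
      = cls (pair_mul (SOME p. p \<in> cls (a, c)) (SOME q. q \<in> cls (b, d)))"
    by (simp add: tens_mul_def pair_mul_def Let_def)
  also have "\<dots> = cls (pair_mul (a, c) (b, d))"
    using assms by (intro cls_eqI tens_eq.sym[OF eq_pair_mul] eq_some_cls) auto
  finally show ?thesis
    by (simp add: pair_mul_def)
qed

lemma bp_monoid_tensor: "bp_monoid tensor"
proof (unfold_locales, unfold tensor_simps)
  show "cls (bp_one B, bp_one T) \<in> E" "cls (bp_zero B, bp_zero T) \<in> E"
    by (simp_all add: cls_in_tens_elts B.one_closed T.one_closed B.zero_closed T.zero_closed)
  show "mul X Y \<in> E" if "X \<in> E" "Y \<in> E" for X Y
    using that by (elim tens_elts_cases)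
      (simp add: mul_cls cls_in_tens_elts B.mul_closed T.mul_closed)
  show "mul (mul X Y) Z = mul X (mul Y Z)" if "X \<in> E" "Y \<in> E" "Z \<in> E" for X Y Z
    using that by (elim tens_elts_cases)
      (simp add: mul_cls B.mul_closed T.mul_closed B.mul_assoc T.mul_assoc)
  show "mul X Y = mul Y X" if "X \<in> E" "Y \<in> E" for X Y
    using that by (elim tens_elts_cases) (simp add: mul_cls B.mul_comm T.mul_comm)
  show "mul (cls (bp_one B, bp_one T)) X = X" if "X \<in> E" for X
    using that by (elim tens_elts_cases)
      (simp add: mul_cls B.one_closed T.one_closed B.one_mul T.one_mul)
  show "mul (cls (bp_zero B, bp_zero T)) X = cls (bp_zero B, bp_zero T)" if "X \<in> E" for X
    using that by (elim tens_elts_cases)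
      (simp add: mul_cls B.zero_closed T.zero_closed B.zero_mul T.zero_mul)
qed

lemma ordered_blueprint_tensor: "ordered_blueprint tensor"
  by (rule ordered_blueprint_gen_sle[OF bp_monoid_tensor]) (simp add: bp_tensor_def)

lemma inl_closed: "a \<in> bp_elts B \<Longrightarrow> inl a \<in> E"
  by (simp add: tens_inl_def cls_in_tens_elts T.one_closed)

lemma inr_closed: "c \<in> bp_elts T \<Longrightarrow> inr c \<in> E"
  by (simp add: tens_inr_def cls_in_tens_elts B.one_closed)

lemma inl_f_eq_inr_v: "l \<in> bp_elts k \<Longrightarrow> inl (f l) = inr (v l)"
proof -
  assume l: "l \<in> bp_elts k"
  have "eq (bp_mul B (bp_one B) (f l), bp_one T) (bp_one B, bp_mul T (v l) (bp_one T))"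
    using l by (intro tens_eq.gen) (auto intro: B.one_closed T.one_closed)
  then show ?thesis
    using l f_closed v_closed cls_eqI
    by (simp add: tens_inl_def tens_inr_def B.one_mul T.mul_one)
qed

lemma cls_eq_mul_inl_inr:
  "a \<in> bp_elts B \<Longrightarrow> c \<in> bp_elts T \<Longrightarrow> cls (a, c) = mul (inl a) (inr c)"
  by (simp add: tens_inl_def tens_inr_def mul_cls B.one_closed T.one_closed B.mul_one T.one_mul)

lemma cls_zero_one_eq_zero: "cls (bp_zero B, bp_one T) = cls (bp_zero B, bp_zero T)"
proof -
  have "eq (bp_mul B (bp_zero B) (f (bp_zero k)), bp_one T)
      (bp_zero B, bp_mul T (v (bp_zero k)) (bp_one T))"
    by (intro tens_eq.gen B.zero_closed T.one_closed k.zero_closed)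
  then show ?thesis
    by (simp add: cls_eqI mult_map_zero[OF f_mult] mult_map_zero[OF v_mult]
        B.zero_mul T.zero_mul B.zero_closed T.one_closed)
qed

lemma cls_one_zero_eq_zero: "cls (bp_one B, bp_zero T) = cls (bp_zero B, bp_zero T)"
proof -
  have "eq (bp_mul B (bp_one B) (f (bp_zero k)), bp_zero T)
      (bp_one B, bp_mul T (v (bp_zero k)) (bp_zero T))"
    by (intro tens_eq.gen B.one_closed T.zero_closed k.zero_closed)
  then show ?thesis
    by (simp add: cls_eqI[symmetric] mult_map_zero[OF f_mult] mult_map_zero[OF v_mult]
        B.one_mul T.zero_mul B.zero_closed T.zero_closed)
qed

lemma gen_rel_carrier: "gen_rel x y \<Longrightarrow> set_mset x \<subseteq> E \<and> set_mset y \<subseteq> E"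
  unfolding gen_rel_def
  by (elim disjE exE conjE) (auto dest!: B.le_carrier T.le_carrier intro!: inl_closed inr_closed)

lemma gen_rel_le_tensor: "gen_rel x y \<Longrightarrow> bp_le tensor x y"
  unfolding tensor_simps using gen_rel_carrier by (blast intro: gen_sle.base)

lemma inl_hom: "bp_hom B tensor inl"
  unfolding bp_hom_def mult_map_def
proof (intro conjI allI impI ballI)
  show "bp_le tensor (image_mset inl x) (image_mset inl y)" if "bp_le B x y" for x y
    using that by (intro gen_rel_le_tensor) (auto simp: gen_rel_def)
qed (simp_all add: tensor_simps inl_closed image_subset_iff tens_inl_def cls_in_tens_elts
      cls_zero_one_eq_zero mul_cls T.one_closed T.one_mul)

lemma inr_hom: "bp_hom T tensor inr"
  unfolding bp_hom_def mult_map_def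
proof (intro conjI allI impI ballI)
  show "bp_le tensor (image_mset inr x) (image_mset inr y)" if "bp_le T x y" for x y
    using that by (intro gen_rel_le_tensor) (auto simp: gen_rel_def)
qed (simp_all add: tensor_simps inr_closed image_subset_iff tens_inr_def cls_in_tens_elts
      cls_one_zero_eq_zero mul_cls B.one_closed B.one_mul)

lemma restrict_inl_mem_hom_under:
  "restrict inl (bp_elts B) \<in> hom_under k B f tensor (inr \<circ> v)"
  using bp_hom_restrict[OF _ inl_hom] B.ordered_bp_axioms inl_f_eq_inr_v f_closed
  by (simp add: hom_under_def ordered_blueprint_iff_ordered_bp)

lemma hom_cls_eq_mul_inl_inr:
  assumes "bp_hom tensor S h" and "a \<in> bp_elts B" and "c \<in> bp_elts T"
  shows "h (cls (a, c)) = bp_mul S (h (inl a)) (h (inr c))"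
  using mult_map_mul[OF bp_hom_mult_map[OF assms(1)]] assms(2,3)
  by (simp add: cls_eq_mul_inl_inr tensor_simps inl_closed inr_closed)

end

section \<open>Universal property of the tensor product\<close>

locale tensor_universal = tensor_product k B T f v + S: ordered_bp S
  for k :: "'k bp" and B :: "'b bp" and T :: "'t bp" and f v and S :: "'s bp" +
  fixes g :: "'t \<Rightarrow> 's"
  assumes g_hom: "bp_hom T S g"
begin

lemmas g_closed = mult_map_closed[OF bp_hom_mult_map[OF g_hom]]
  and g_one = mult_map_one[OF bp_hom_mult_map[OF g_hom]]
  and g_zero = mult_map_zero[OF bp_hom_mult_map[OF g_hom]]
  and g_mul = mult_map_mul[OF bp_hom_mult_map[OF g_hom]]

lemma restrict_comp_inl_mem_hom_under:
  assumes "h \<in> hom_under T tensor inr S g"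
  shows "restrict (h \<circ> inl) (bp_elts B) \<in> hom_under k B f S (g \<circ> v)"
proof -
  have h: "bp_hom tensor S h" and h_inr: "\<And>c. c \<in> bp_elts T \<Longrightarrow> h (inr c) = g c"
    using assms by (auto simp: hom_under_def)
  have "bp_hom B S (restrict (h \<circ> inl) (bp_elts B))"
    using bp_hom_restrict[OF _ bp_hom_comp[OF inl_hom h]] B.ordered_bp_axioms
    by (simp add: ordered_blueprint_iff_ordered_bp)
  then show ?thesis
    using h_inr inl_f_eq_inr_v f_closed v_closed by (simp add: hom_under_def)
qed

lemma hom_under_eqI:
  assumes h: "h \<in> hom_under T tensor inr S g" and h': "h' \<in> hom_under T tensor inr S g"
    and eq_on_B: "restrict (h \<circ> inl) (bp_elts B) = restrict (h' \<circ> inl) (bp_elts B)"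
  shows "h = h'"
proof (rule extensionalityI)
  show "h \<in> extensional E" "h' \<in> extensional E"
    using h h' by (simp_all add: hom_under_def tensor_simps)
  fix X
  assume "X \<in> E"
  then obtain a c where a: "a \<in> bp_elts B" and c: "c \<in> bp_elts T" and X: "X = cls (a, c)"
    by (rule tens_elts_cases)
  have "h (inl a) = h' (inl a)"
    using fun_cong[OF eq_on_B, of a] a by simp
  moreover have "h (inr c) = h' (inr c)"
    using h h' c by (simp add: hom_under_def)
  moreover have "bp_hom tensor S h" "bp_hom tensor S h'"
    using h h' by (simp_all add: hom_under_def)
  ultimately show "h X = h' X"
    using a c by (simp add: X hom_cls_eq_mul_inl_inr)
qed

definition lift :: "('b \<Rightarrow> 's) \<Rightarrow> ('b \<times> 't) set \<Rightarrow> 's" where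
  "lift w X =
     (if X \<in> E then (case SOME p. p \<in> X of (a, c) \<Rightarrow> bp_mul S (w a) (g c)) else undefined)"

context
  fixes w :: "'b \<Rightarrow> 's"
  assumes w: "w \<in> hom_under k B f S (g \<circ> v)"
begin

lemma w_hom: "bp_hom B S w"
  using w by (simp add: hom_under_def)

lemmas w_closed = mult_map_closed[OF bp_hom_mult_map[OF w_hom]]
  and w_one = mult_map_one[OF bp_hom_mult_map[OF w_hom]]
  and w_zero = mult_map_zero[OF bp_hom_mult_map[OF w_hom]]
  and w_mul = mult_map_mul[OF bp_hom_mult_map[OF w_hom]]

lemma w_f_eq_g_v: "l \<in> bp_elts k \<Longrightarrow> w (f l) = g (v l)"
  using w by (simp add: hom_under_def)

lemma lift_respects_eq:
  "eq p q \<Longrightarrow> bp_mul S (w (fst p)) (g (snd p)) = bp_mul S (w (fst q)) (g (snd q))"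
proof (induction rule: tens_eq.induct)
  case (gen a c l)
  have "bp_mul S (w (bp_mul B a (f l))) (g c) = bp_mul S (bp_mul S (w a) (g (v l))) (g c)"
    using gen f_closed by (simp add: w_mul w_f_eq_g_v)
  also have "\<dots> = bp_mul S (w a) (bp_mul S (g (v l)) (g c))"
    using gen v_closed by (simp add: S.mul_assoc w_closed g_closed)
  also have "\<dots> = bp_mul S (w a) (g (bp_mul T (v l) c))"
    using gen v_closed by (simp add: g_mul)
  finally show ?case by simp
qed simp_all

lemma lift_cls:
  "a \<in> bp_elts B \<Longrightarrow> c \<in> bp_elts T \<Longrightarrow> lift w (cls (a, c)) = bp_mul S (w a) (g c)"
  using lift_respects_eq[OF eq_some_cls[of "(a, c)"]]
  by (simp add: lift_def cls_in_tens_elts split: prod.split)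

lemma lift_inl: "a \<in> bp_elts B \<Longrightarrow> lift w (inl a) = w a"
  by (simp add: tens_inl_def lift_cls T.one_closed g_one S.mul_one w_closed)

lemma lift_inr: "c \<in> bp_elts T \<Longrightarrow> lift w (inr c) = g c"
  by (simp add: tens_inr_def lift_cls B.one_closed w_one S.one_mul g_closed)

lemma lift_mult_map: "mult_map tensor S (lift w)"
  unfolding mult_map_def tensor_simps
proof (intro conjI ballI subsetI)
  show "Y \<in> bp_elts S" if "Y \<in> lift w ` E" for Y
    using that by (auto elim!: tens_elts_cases simp: lift_cls S.mul_closed w_closed g_closed)
  show "lift w (cls (bp_one B, bp_one T)) = bp_one S"
    by (simp add: lift_cls B.one_closed T.one_closed w_one g_one S.one_mul S.one_closed)
  show "lift w (cls (bp_zero B, bp_zero T)) = bp_zero S"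
    by (simp add: lift_cls B.zero_closed T.zero_closed w_zero g_zero S.zero_mul S.zero_closed)
  show "lift w (mul X Y) = bp_mul S (lift w X) (lift w Y)" if "X \<in> E" "Y \<in> E" for X Y
    using that
    by (elim tens_elts_cases)
      (simp add: mul_cls lift_cls B.mul_closed T.mul_closed w_mul g_mul S.mul_mul_swap
        w_closed g_closed)
qed

lemma lift_gen_rel: "gen_rel x y \<Longrightarrow> bp_le S (image_mset (lift w) x) (image_mset (lift w) y)"
proof (unfold gen_rel_def, elim disjE exE conjE)
  fix a b
  assume "bp_le B a b" "x = image_mset inl a" "y = image_mset inl b"
  moreover have "image_mset (lift w \<circ> inl) a = image_mset w a"
    and "image_mset (lift w \<circ> inl) b = image_mset w b"
    using B.le_carrier[OF \<open>bp_le B a b\<close>] lift_inl by (auto intro!: image_mset_cong)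
  ultimately show ?thesis
    using bp_hom_le[OF w_hom] by (simp add: multiset.map_comp)
next
  fix a b
  assume "bp_le T a b" "x = image_mset inr a" "y = image_mset inr b"
  moreover have "image_mset (lift w \<circ> inr) a = image_mset g a"
    and "image_mset (lift w \<circ> inr) b = image_mset g b"
    using T.le_carrier[OF \<open>bp_le T a b\<close>] lift_inr by (auto intro!: image_mset_cong)
  ultimately show ?thesis
    using bp_hom_le[OF g_hom] by (simp add: multiset.map_comp)
qed

lemma lift_hom: "bp_hom tensor S (lift w)"
  unfolding bp_hom_def
proof (intro conjI allI impI lift_mult_map)
  interpret TS: bp_monoid tensor by (rule bp_monoid_tensor)
  fix x y
  assume "bp_le tensor x y"
  then show "bp_le S (image_mset (lift w) x) (image_mset (lift w) y)"
    unfolding tensor_simps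
    by (rule S.gen_sle_image)
      (use TS.mul_closed TS.zero_closed mult_mapD[OF lift_mult_map] lift_gen_rel in
        \<open>simp_all add: tensor_simps\<close>)
qed

lemma lift_mem_hom_under: "lift w \<in> hom_under T tensor inr S g"
proof -
  have "lift w \<in> extensional E"
    by (simp add: extensional_def lift_def)
  then show ?thesis
    using lift_hom lift_inr by (simp add: hom_under_def tensor_simps)
qed

lemma restrict_lift_comp_inl: "restrict (lift w \<circ> inl) (bp_elts B) = w"
  using w lift_inl by (auto simp: hom_under_def extensional_def)

end

theorem tensor_universal_property:
  "bij_betw (\<lambda>h. restrict (h \<circ> inl) (bp_elts B))
     (hom_under T tensor inr S g) (hom_under k B f S (g \<circ> v))"
proof (rule bij_betwI')
  show "restrict (h \<circ> inl) (bp_elts B) \<in> hom_under k B f S (g \<circ> v)"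
    if "h \<in> hom_under T tensor inr S g" for h
    using that by (rule restrict_comp_inl_mem_hom_under)
  show "\<exists>h \<in> hom_under T tensor inr S g. w = restrict (h \<circ> inl) (bp_elts B)"
    if "w \<in> hom_under k B f S (g \<circ> v)" for w
    using that lift_mem_hom_under restrict_lift_comp_inl by metis
qed (use hom_under_eqI in blast)

end

theorem theoremA:
  fixes k :: "'k bp" and B :: "'b bp" and T :: "'t bp"
    and f :: "'k \<Rightarrow> 'b" and v :: "'k \<Rightarrow> 't"
  assumes "ordered_blueprint k" and "ordered_blueprint B" and "bp_hom k B f"
    and "ordered_blueprint T" and "valuation k T v"
    and "totally_positive T"
  shows "ordered_blueprint (bp_tensor (bp_mon k) (bp_mon B) T f v)
       \<and> bp_hom T (bp_tensor (bp_mon k) (bp_mon B) T f v) (tens_inr (bp_mon k) (bp_mon B) T f v)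
       \<and> restrict (tens_inl (bp_mon k) (bp_mon B) T f v) (bp_elts B)
           \<in> val_ext k B f (bp_tensor (bp_mon k) (bp_mon B) T f v) v
               (tens_inr (bp_mon k) (bp_mon B) T f v)
       \<and> (\<forall>(S :: 's bp) (g :: 't \<Rightarrow> 's). ordered_blueprint S \<and> bp_hom T S g \<longrightarrow>
            bij_betw (\<lambda>h. restrict (h \<circ> tens_inl (bp_mon k) (bp_mon B) T f v) (bp_elts B))
              (hom_under T (bp_tensor (bp_mon k) (bp_mon B) T f v)
                 (tens_inr (bp_mon k) (bp_mon B) T f v) S g)
              (val_ext k B f S v g))"
proof -
  have "tensor_product (bp_mon k) (bp_mon B) T f v"
    unfolding tensor_product_def tensor_product_axioms_def
      ordered_blueprint_iff_ordered_bp[symmetric]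
    using assms by (simp add: ordered_blueprint_mon bp_hom_def valuation_def)
  then interpret tensor_product "bp_mon k" "bp_mon B" T f v .
  have val_ext_eq: "val_ext k B f S v g = hom_under (bp_mon k) (bp_mon B) f S (g \<circ> v)"
    if "ordered_blueprint S" and "bp_hom T S g" for S :: "'s' bp" and g
    using val_ext_eq_hom_under[OF that(1) totally_positive_hom[OF that(2) assms(6)]] .
  have "restrict inl (bp_elts B) \<in> val_ext k B f tensor v inr"
    using val_ext_eq[OF ordered_blueprint_tensor inr_hom] restrict_inl_mem_hom_under by simp
  moreover have "bij_betw (\<lambda>h. restrict (h \<circ> inl) (bp_elts B)) (hom_under T tensor inr S g)
      (val_ext k B f S v g)" if "ordered_blueprint S" and "bp_hom T S g" for S :: "'s bp" and g
  proof -
    interpret tensor_universal "bp_mon k" "bp_mon B" T f v S g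
      using that \<open>tensor_product (bp_mon k) (bp_mon B) T f v\<close>
      by (simp add: tensor_universal_def tensor_universal_axioms_def
          ordered_blueprint_iff_ordered_bp)
    show ?thesis
      using tensor_universal_property val_ext_eq[OF that] by simp
  qed
  ultimately show ?thesis
    using ordered_blueprint_tensor inr_hom by blast
qed

end
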